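(* There is an absolute constant $C$ such that for every simple temporal clique on $n$ vertices and every bidirectional fireworks cover $S$ of it (for any outcome of the arbitrary choices in the constructions), $|S|\le \frac{1}{2}\binom{n}{2}+Cn$.
   Context: A simple temporal clique is a pair $\mathcal{G}=(G,\lambda)$ where $G=(V,E)$ is the complete graph on a finite set $V$ of $n$ vertices and $\lambda:E\to\mathbb{N}$ assigns to each edge a single integer label such that any two distinct edges sharing an endpoint have different labels; the label of an arc $(x,y)$ is $\lambda(\{x,y\})$. For a vertex $v$, $e^-(v)$ (resp. $e^+(v)$) is the edge incident to $v$ with smallest (resp. largest) label. Forward construction: let $E^-$ be the set of arcs $(u,v)$ with $\{u,v\}=e^-(v)$, except that if $e^-(u)=e^-(v)=\{u,v\}$ only one of $(u,v),(v,u)$ is included (arbitrarily). Initialize $E^-_T:=E^-$; for every vertex $v$ of out-degree at least $2$ in $(V,E^-)$, with out-arcs $(v,u_1),\dots,(v,u_\ell)$ where $(v,u_\ell)$ has the largest label, for each $i<\ell$: if $u_i$ has out-degree $0$ in $(V,E^-)$ replace $(v,u_i)$ by $(u_i,v)$ in $E^-_T$, otherwise remove $(v,u_i)$ from $E^-_T$. Emitters ($X^-$) are vertices of out-degree $0$ in $(V,E^-_T)$. Backward construction: let $E^+$ be the set of arcs $(v,u)$ with $\{u,v\}=e^+(v)$, except that if $e^+(u)=e^+(v)=\{u,v\}$ only one of $(u,v),(v,u)$ is included (arbitrarily). Initialize $E^+_T:=E^+$; for every vertex $v$ of in-degree at least $2$ in $(V,E^+)$, with in-arcs $(u_1,v),\dots,(u_\ell,v)$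 where $(u_\ell,v)$ has the smallest label, for each $i<\ell$: if $u_i$ has in-degree $0$ in $(V,E^+)$ replace $(u_i,v)$ by $(v,u_i)$ in $E^+_T$, otherwise remove $(u_i,v)$ from $E^+_T$. Collectors ($X^+$) are vertices of in-degree $0$ in $(V,E^+_T)$. The bidirectional fireworks cover is $S=\{\{u,v\}:(u,v)\in E^-_T\cup E^+_T\}\cup\{\{u,v\}\in E: u\in X^-, v\in X^+\}$. *)

theory Defs
  imports Complex_Main
begin

text \<open>A simple temporal clique on the finite vertex set V (vertices are naturals; any
finite set can be relabelled this way).\<close>

definition simple_temporal_clique :: "nat set \<Rightarrow> (nat set \<Rightarrow> nat) \<Rightarrow> bool" where
  "simple_temporal_clique V lam \<longleftrightarrow> finite V \<and>
     (\<forall>x\<in>V. \<forall>y\<in>V. \<forall>z\<in>V. x \<noteq> y \<and> x \<noteq> z \<and> y \<noteq> z \<longrightarrow> lam {x,y} \<noteq> lam {x,z})"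

text \<open>Candidate arcs: (u,v) with {u,v} = e^-(v), i.e. the edge of minimum label at v.\<close>
definition Eminus_cand :: "nat set \<Rightarrow> (nat set \<Rightarrow> nat) \<Rightarrow> (nat \<times> nat) set" where
  "Eminus_cand V lam = {(u,v). u \<in> V \<and> v \<in> V \<and> u \<noteq> v \<and>
      (\<forall>w\<in>V. w \<noteq> v \<longrightarrow> lam {u,v} \<le> lam {v,w})}"

text \<open>Candidate arcs: (v,u) with {u,v} = e^+(v), i.e. the edge of maximum label at v.\<close>
definition Eplus_cand :: "nat set \<Rightarrow> (nat set \<Rightarrow> nat) \<Rightarrow> (nat \<times> nat) set" where
  "Eplus_cand V lam = {(v,u). u \<in> V \<and> v \<in> V \<and> u \<noteq> v \<and>
      (\<forall>w\<in>V. w \<noteq> v \<longrightarrow> lam {v,w} \<le> lam {v,u})}"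

text \<open>A valid outcome of the arbitrary choice: from each mutual pair exactly one arc is kept,
all other candidate arcs are kept.\<close>
definition valid_choice :: "(nat \<times> nat) set \<Rightarrow> (nat \<times> nat) set \<Rightarrow> bool" where
  "valid_choice Cand A \<longleftrightarrow> A \<subseteq> Cand \<and>
     (\<forall>(u,v)\<in>Cand. (u,v) \<in> A \<or> (v,u) \<in> A) \<and>
     (\<forall>(u,v)\<in>A. (v,u) \<notin> A)"

definition out_deg_ge2 :: "(nat \<times> nat) set \<Rightarrow> nat \<Rightarrow> bool" where
  "out_deg_ge2 A v \<longleftrightarrow> (\<exists>w1 w2. w1 \<noteq> w2 \<and> (v,w1) \<in> A \<and> (v,w2) \<in> A)"

definition in_deg_ge2 :: "(nat \<times> nat) set \<Rightarrow> nat \<Rightarrow> bool" where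
  "in_deg_ge2 A v \<longleftrightarrow> (\<exists>w1 w2. w1 \<noteq> w2 \<and> (w1,v) \<in> A \<and> (w2,v) \<in> A)"

definition forward_T :: "(nat set \<Rightarrow> nat) \<Rightarrow> (nat \<times> nat) set \<Rightarrow> (nat \<times> nat) set" where
  "forward_T lam Em =
     {(v,u). (v,u) \<in> Em \<and> (\<not> out_deg_ge2 Em v \<or> (\<forall>w. (v,w) \<in> Em \<longrightarrow> lam {v,w} \<le> lam {v,u}))}
   \<union> {(u,v). (v,u) \<in> Em \<and> out_deg_ge2 Em v \<and> \<not> (\<forall>w. (v,w) \<in> Em \<longrightarrow> lam {v,w} \<le> lam {v,u})
            \<and> (\<forall>w. (u,w) \<notin> Em)}"

definition backward_T :: "(nat set \<Rightarrow> nat) \<Rightarrow> (nat \<times> nat) set \<Rightarrow> (nat \<times> nat) set" where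
  "backward_T lam Ep =
     {(u,v). (u,v) \<in> Ep \<and> (\<not> in_deg_ge2 Ep v \<or> (\<forall>w. (w,v) \<in> Ep \<longrightarrow> lam {u,v} \<le> lam {w,v}))}
   \<union> {(v,u). (u,v) \<in> Ep \<and> in_deg_ge2 Ep v \<and> \<not> (\<forall>w. (w,v) \<in> Ep \<longrightarrow> lam {u,v} \<le> lam {w,v})
            \<and> (\<forall>w. (w,u) \<notin> Ep)}"

definition emitters :: "nat set \<Rightarrow> (nat \<times> nat) set \<Rightarrow> nat set" where
  "emitters V EmT = {v \<in> V. \<forall>w. (v,w) \<notin> EmT}"

definition collectors :: "nat set \<Rightarrow> (nat \<times> nat) set \<Rightarrow> nat set" where
  "collectors V EpT = {v \<in> V. \<forall>w. (w,v) \<notin> EpT}"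

definition fireworks_cover ::
  "nat set \<Rightarrow> (nat set \<Rightarrow> nat) \<Rightarrow> (nat \<times> nat) set \<Rightarrow> (nat \<times> nat) set \<Rightarrow> nat set set" where
  "fireworks_cover V lam Em Ep =
     (let EmT = forward_T lam Em; EpT = backward_T lam Ep;
          Xm = emitters V EmT; Xp = collectors V EpT
      in {{u,v} | u v. (u,v) \<in> EmT \<union> EpT} \<union> {{u,v} | u v. u \<in> Xm \<and> v \<in> Xp \<and> u \<noteq> v})"

end

(* Both E^-_T and E^+_T have at most 2n arcs, so the quadratic part of |S| comes only from the
   emitter-collector pairs. An emitter u has out-degree 0 already in E^-, so the arc on e^-(u)
   enters u from a non-emitter p u; and p is injective, because of two emitters entered from the
   same vertex the one on the smaller label would have been turned around. Hence 2|X^-| <= n + 1.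
   Replacing every label l by M - l exchanges e^- and e^+ and turns the backward construction
   into the forward one with all arcs reversed, so also 2|X^+| <= n + 1, and
   |S| <= 4n + (n+1)^2/4 <= binom(n,2)/2 + 5n. *)

theory Submission
  imports Defs
begin

lemma finite_ex_max_image:
  fixes f :: "'a \<Rightarrow> 'b::linorder"
  assumes "finite S" "x \<in> S"
  shows "\<exists>m\<in>S. \<forall>y\<in>S. f y \<le> f m"
proof -
  from assms have "Max (f ` S) \<in> f ` S" by (intro Max_in) auto
  then obtain m where "m \<in> S" "Max (f ` S) = f m" by blast
  moreover have "f y \<le> Max (f ` S)" if "y \<in> S" for y using assms(1) that by simp
  ultimately show ?thesis by metis
qed

lemma finite_ex_min_image:
  fixes f :: "'a \<Rightarrow> 'b::linorder"
  assumes "finite S" "x \<in> S"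
  shows "\<exists>m\<in>S. \<forall>y\<in>S. f m \<le> f y"
proof -
  from assms have "Min (f ` S) \<in> f ` S" by (intro Min_in) auto
  then obtain m where "m \<in> S" "Min (f ` S) = f m" by blast
  moreover have "Min (f ` S) \<le> f y" if "y \<in> S" for y using assms(1) that by simp
  ultimately show ?thesis by metis
qed

lemma simple_temporal_clique_finite: "simple_temporal_clique V lam \<Longrightarrow> finite V"
  unfolding simple_temporal_clique_def by blast

lemma simple_temporal_clique_label_inj:
  assumes "simple_temporal_clique V lam" "x \<in> V" "y \<in> V" "z \<in> V" "x \<noteq> y" "x \<noteq> z"
    and "lam {x,y} = lam {x,z}"
  shows "y = z"
  using assms unfolding simple_temporal_clique_def by blast

lemma valid_choice_subset: "valid_choice C A \<Longrightarrow> A \<subseteq> C"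
  unfolding valid_choice_def by blast

lemma valid_choice_converse: "valid_choice (C\<inverse>) A \<longleftrightarrow> valid_choice C (A\<inverse>)"
  unfolding valid_choice_def by auto

lemma Eminus_cand_subset: "Eminus_cand V lam \<subseteq> V \<times> V - Id"
  unfolding Eminus_cand_def by blast

lemma Eminus_cand_unique:
  assumes "simple_temporal_clique V lam" "(u1,v) \<in> Eminus_cand V lam" "(u2,v) \<in> Eminus_cand V lam"
  shows "u1 = u2"
proof -
  from assms(2,3) have "lam {v,u1} \<le> lam {v,u2}" "lam {v,u2} \<le> lam {v,u1}"
    and "u1 \<in> V" "u2 \<in> V" "v \<in> V" "v \<noteq> u1" "v \<noteq> u2"
    unfolding Eminus_cand_def by (simp_all add: insert_commute)
  then show ?thesis using simple_temporal_clique_label_inj[OF assms(1)] by (meson antisym)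
qed

lemma card_Eminus_cand_le:
  assumes "simple_temporal_clique V lam"
  shows "card (Eminus_cand V lam) \<le> card V"
proof (rule card_inj_on_le)
  show "inj_on snd (Eminus_cand V lam)"
    using Eminus_cand_unique[OF assms] by (intro inj_onI) (metis prod.collapse)
  show "snd ` Eminus_cand V lam \<subseteq> V" using Eminus_cand_subset by fastforce
  show "finite V" using simple_temporal_clique_finite[OF assms] .
qed

lemma Eminus_cand_ex_in_arc:
  assumes "finite V" "u \<in> V" "z \<in> V" "z \<noteq> u"
  shows "\<exists>x. (x,u) \<in> Eminus_cand V lam"
proof -
  obtain x where "x \<in> V - {u}" "\<forall>y\<in>V - {u}. lam {u,x} \<le> lam {u,y}"
    using finite_ex_min_image[of "V - {u}" z "\<lambda>y. lam {u,y}"] assms by blast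
  then have "(x,u) \<in> Eminus_cand V lam"
    using assms(2) unfolding Eminus_cand_def by (simp add: insert_commute)
  then show ?thesis ..
qed

lemma forward_T_subset: "forward_T lam Em \<subseteq> Em \<union> Em\<inverse>"
  unfolding forward_T_def by blast

lemma emitter_no_out_arc:
  assumes "finite Em" "u \<in> emitters V (forward_T lam Em)"
  shows "(u,w) \<notin> Em"
proof
  assume "(u,w) \<in> Em"
  moreover have "finite {w. (u,w) \<in> Em}"
    using finite_imageI[OF assms(1), of snd] by (rule finite_subset[rotated]) force
  ultimately obtain m where "(u,m) \<in> Em" "\<forall>w. (u,w) \<in> Em \<longrightarrow> lam {u,w} \<le> lam {u,m}"
    using finite_ex_max_image[of "{w. (u,w) \<in> Em}" w "\<lambda>w. lam {u,w}"] by auto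
  then have "(u,m) \<in> forward_T lam Em" unfolding forward_T_def by blast
  with assms(2) show False unfolding emitters_def by blast
qed

lemma card_emitters_forward_T:
  assumes "finite V" "Em \<subseteq> V \<times> V"
    and covers: "\<And>u. u \<in> V \<Longrightarrow> \<exists>z. (z,u) \<in> Em \<or> (u,z) \<in> Em"
    and distinct: "\<And>v u1 u2. (v,u1) \<in> Em \<Longrightarrow> (v,u2) \<in> Em \<Longrightarrow> lam {v,u1} = lam {v,u2} \<Longrightarrow> u1 = u2"
  shows "2 * card (emitters V (forward_T lam Em)) \<le> card V"
proof -
  define X where "X = emitters V (forward_T lam Em)"
  have "finite Em" using assms(1,2) by (meson finite_SigmaI finite_subset)
  have X_V: "X \<subseteq> V" unfolding X_def emitters_def by blast
  have no_out: "(u,w) \<notin> Em" if "u \<in> X" for u w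
    using emitter_no_out_arc[OF \<open>finite Em\<close>] that unfolding X_def by blast
  define p where "p u = (SOME v. (v,u) \<in> Em)" for u
  have p_arc: "(p u, u) \<in> Em" if "u \<in> X" for u
  proof -
    from covers[of u] X_V that no_out[OF that] have "\<exists>v. (v,u) \<in> Em" by blast
    then show ?thesis unfolding p_def by (rule someI_ex)
  qed
  have p_into: "p ` X \<subseteq> V - X"
    using p_arc no_out assms(2) by blast
  have in_arc_max: "lam {v,w} \<le> lam {v,u}" if "u \<in> X" "(v,u) \<in> Em" "(v,w) \<in> Em" for u v w
  proof (rule ccontr)
    assume not_max: "\<not> lam {v,w} \<le> lam {v,u}"
    then have "w \<noteq> u" by blast
    with that have "out_deg_ge2 Em v" unfolding out_deg_ge2_def by blast
    with that(2,3) not_max no_out[OF that(1)] have "(u,v) \<in> forward_T lam Em"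
      unfolding forward_T_def by blast
    then show False using that(1) unfolding X_def emitters_def by blast
  qed
  have "inj_on p X"
  proof (rule inj_onI)
    fix u1 u2 assume "u1 \<in> X" "u2 \<in> X" "p u1 = p u2"
    with p_arc have "(p u1, u1) \<in> Em" "(p u1, u2) \<in> Em" by metis+
    with in_arc_max \<open>u1 \<in> X\<close> \<open>u2 \<in> X\<close> show "u1 = u2"
      by (meson antisym distinct)
  qed
  then have "card X \<le> card (V - X)"
    using p_into assms(1) by (intro card_inj_on_le) auto
  moreover have "card (V - X) = card V - card X"
    using X_V assms(1) by (meson card_Diff_subset finite_subset)
  moreover have "card X \<le> card V" using X_V assms(1) by (rule card_mono[rotated])
  ultimately show ?thesis unfolding X_def by linarith
qed

lemma forward_T_bounds:
  assumes clique: "simple_temporal_clique V lam" and choice: "valid_choice (Eminus_cand V lam) Em"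
  shows "finite (forward_T lam Em)"
    and "card (forward_T lam Em) \<le> 2 * card V"
    and "2 * card (emitters V (forward_T lam Em)) \<le> card V + 1"
proof -
  have "finite V" using simple_temporal_clique_finite[OF clique] .
  have Em_cand: "Em \<subseteq> Eminus_cand V lam" using valid_choice_subset[OF choice] .
  have "finite (Eminus_cand V lam)"
    using \<open>finite V\<close> by (intro finite_subset[OF Eminus_cand_subset]) simp
  then have "finite Em" using Em_cand by (rule finite_subset[rotated])
  then show "finite (forward_T lam Em)" by (intro finite_subset[OF forward_T_subset]) simp
  have "card (forward_T lam Em) \<le> card (Em \<union> Em\<inverse>)"
    using forward_T_subset \<open>finite Em\<close> by (intro card_mono) auto
  also have "\<dots> \<le> 2 * card Em" using card_Un_le[of Em "Em\<inverse>"] by simp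
  also have "\<dots> \<le> 2 * card V"
    using card_mono[OF \<open>finite (Eminus_cand V lam)\<close> Em_cand] card_Eminus_cand_le[OF clique]
    by linarith
  finally show "card (forward_T lam Em) \<le> 2 * card V" .
  show "2 * card (emitters V (forward_T lam Em)) \<le> card V + 1"
  proof (cases "card V \<le> 1")
    case True
    moreover have "card (emitters V (forward_T lam Em)) \<le> card V"
      using \<open>finite V\<close> by (intro card_mono) (auto simp: emitters_def)
    ultimately show ?thesis by linarith
  next
    case False
    have "2 * card (emitters V (forward_T lam Em)) \<le> card V"
    proof (rule card_emitters_forward_T[OF \<open>finite V\<close>])
      show "Em \<subseteq> V \<times> V" using Em_cand Eminus_cand_subset by blast
      show "\<exists>z. (z,u) \<in> Em \<or> (u,z) \<in> Em" if u: "u \<in> V" for u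
      proof -
        from False have "\<exists>a\<in>V. \<exists>b\<in>V. a \<noteq> b"
          using card_le_Suc0_iff_eq[OF \<open>finite V\<close>] by auto
        then obtain z where "z \<in> V" "z \<noteq> u" by blast
        then obtain x where "(x,u) \<in> Eminus_cand V lam"
          using Eminus_cand_ex_in_arc[OF \<open>finite V\<close> u] by blast
        then show ?thesis using choice unfolding valid_choice_def by blast
      qed
      show "u1 = u2" if "(v,u1) \<in> Em" "(v,u2) \<in> Em" "lam {v,u1} = lam {v,u2}" for v u1 u2
      proof -
        from that(1,2) Em_cand Eminus_cand_subset
        have "v \<in> V" "u1 \<in> V" "u2 \<in> V" "v \<noteq> u1" "v \<noteq> u2" by blast+
        then show ?thesis using that(3) by (rule simple_temporal_clique_label_inj[OF clique])
      qed
    qed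
    then show ?thesis by linarith
  qed
qed

(* Max (lam ` Pow V) bounds the labels of all edges of V, so the truncated subtraction
   reverses their order. *)
definition reverse_time :: "nat set \<Rightarrow> (nat set \<Rightarrow> nat) \<Rightarrow> nat set \<Rightarrow> nat" where
  "reverse_time V lam e = Max (lam ` Pow V) - lam e"

lemma reverse_time_le_iff:
  assumes "finite V" "e \<subseteq> V" "e' \<subseteq> V"
  shows "reverse_time V lam e \<le> reverse_time V lam e' \<longleftrightarrow> lam e' \<le> lam e"
proof -
  have "lam e \<le> Max (lam ` Pow V)" "lam e' \<le> Max (lam ` Pow V)"
    using assms by simp_all
  then show ?thesis unfolding reverse_time_def by linarith
qed

lemma reverse_time_edge_le_iff:
  assumes "finite V" "a \<in> V" "b \<in> V" "c \<in> V" "d \<in> V"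
  shows "reverse_time V lam {a,b} \<le> reverse_time V lam {c,d} \<longleftrightarrow> lam {c,d} \<le> lam {a,b}"
  using assms by (intro reverse_time_le_iff) auto

lemma reverse_time_edge_eq_iff:
  assumes "finite V" "a \<in> V" "b \<in> V" "c \<in> V" "d \<in> V"
  shows "reverse_time V lam {a,b} = reverse_time V lam {c,d} \<longleftrightarrow> lam {a,b} = lam {c,d}"
  using assms by (simp add: order_eq_iff reverse_time_edge_le_iff conj_commute)

lemma simple_temporal_clique_reverse_time:
  assumes "simple_temporal_clique V lam"
  shows "simple_temporal_clique V (reverse_time V lam)"
  unfolding simple_temporal_clique_def
proof (intro conjI ballI impI)
  show "finite V" using simple_temporal_clique_finite[OF assms] .
  fix x y z assume "x \<in> V" "y \<in> V" "z \<in> V" "x \<noteq> y \<and> x \<noteq> z \<and> y \<noteq> z"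
  then have "lam {x,y} \<noteq> lam {x,z}" using simple_temporal_clique_label_inj[OF assms] by blast
  then show "reverse_time V lam {x,y} \<noteq> reverse_time V lam {x,z}"
    by (simp add: reverse_time_edge_eq_iff \<open>finite V\<close> \<open>x \<in> V\<close> \<open>y \<in> V\<close> \<open>z \<in> V\<close>)
qed

lemma Eplus_cand_reverse_time:
  assumes "finite V"
  shows "Eplus_cand V lam = (Eminus_cand V (reverse_time V lam))\<inverse>"
proof -
  have "(v,u) \<in> Eplus_cand V lam \<longleftrightarrow> (u,v) \<in> Eminus_cand V (reverse_time V lam)" for u v
    unfolding Eplus_cand_def Eminus_cand_def
    by (auto simp: reverse_time_edge_le_iff[OF assms] insert_commute)
  then show ?thesis by auto
qed

lemma out_deg_ge2_converse: "out_deg_ge2 (A\<inverse>) v \<longleftrightarrow> in_deg_ge2 A v"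
  unfolding out_deg_ge2_def in_deg_ge2_def by simp

lemma backward_T_reverse_time:
  assumes "finite V" "Ep \<subseteq> V \<times> V"
  shows "backward_T lam Ep = (forward_T (reverse_time V lam) (Ep\<inverse>))\<inverse>"
proof -
  have in_V: "a \<in> V" "b \<in> V" if "(a,b) \<in> Ep" for a b using that assms(2) by auto
  have min_iff: "(\<forall>w. (w,v) \<in> Ep \<longrightarrow> lam {u,v} \<le> lam {w,v}) \<longleftrightarrow>
        (\<forall>w. (w,v) \<in> Ep \<longrightarrow> reverse_time V lam {v,w} \<le> reverse_time V lam {v,u})"
    if "(u,v) \<in> Ep" for u v
    using that by (auto simp: reverse_time_edge_le_iff[OF assms(1)] in_V insert_commute)
  show ?thesis
  proof (rule set_eqI)
    fix p :: "nat \<times> nat"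
    obtain a b where p: "p = (a,b)" by fastforce
    show "p \<in> backward_T lam Ep \<longleftrightarrow> p \<in> (forward_T (reverse_time V lam) (Ep\<inverse>))\<inverse>"
      unfolding p backward_T_def forward_T_def out_deg_ge2_converse
      by (simp add: min_iff cong: conj_cong)
  qed
qed

lemma collectors_eq_emitters_converse: "collectors V T = emitters V (T\<inverse>)"
  unfolding collectors_def emitters_def by simp

lemma valid_choice_Eplus_cand_reverse_time:
  assumes "finite V" "valid_choice (Eplus_cand V lam) Ep"
  shows "valid_choice (Eminus_cand V (reverse_time V lam)) (Ep\<inverse>)"
  using assms(2) by (simp add: Eplus_cand_reverse_time[OF assms(1)] valid_choice_converse)

lemma card_fireworks_cover_le:
  assumes "finite V" "finite (forward_T lam Em)" "finite (backward_T lam Ep)"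
  shows "card (fireworks_cover V lam Em Ep) \<le> card (forward_T lam Em) + card (backward_T lam Ep)
           + card (emitters V (forward_T lam Em)) * card (collectors V (backward_T lam Ep))"
proof -
  define edge :: "nat \<times> nat \<Rightarrow> nat set" where "edge = (\<lambda>(u,v). {u,v})"
  define T where "T = forward_T lam Em \<union> backward_T lam Ep"
  define X where "X = emitters V (forward_T lam Em) \<times> collectors V (backward_T lam Ep)"
  have "finite T" unfolding T_def using assms(2,3) by blast
  have "finite X" unfolding X_def emitters_def collectors_def using assms(1) by simp
  have "fireworks_cover V lam Em Ep \<subseteq> edge ` T \<union> edge ` X"
    unfolding fireworks_cover_def Let_def edge_def T_def X_def by force
  then have "card (fireworks_cover V lam Em Ep) \<le> card (edge ` T \<union> edge ` X)"
    using \<open>finite T\<close> \<open>finite X\<close> by (intro card_mono) auto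
  also have "\<dots> \<le> card T + card X"
    using card_Un_le card_image_le[OF \<open>finite T\<close>] card_image_le[OF \<open>finite X\<close>]
    by (metis add_mono order_trans)
  also have "\<dots> \<le> card (forward_T lam Em) + card (backward_T lam Ep)
                   + card (emitters V (forward_T lam Em)) * card (collectors V (backward_T lam Ep))"
    unfolding T_def X_def using card_Un_le by (simp add: card_cartesian_product)
  finally show ?thesis .
qed

lemma card_fireworks_cover_bound:
  assumes clique: "simple_temporal_clique V lam"
    and choice_minus: "valid_choice (Eminus_cand V lam) Em"
    and choice_plus: "valid_choice (Eplus_cand V lam) Ep"
  shows "4 * card (fireworks_cover V lam Em Ep) \<le> card V * (card V - 1) + 20 * card V"
proof -
  define n where "n = card V"
  define lam' where "lam' = reverse_time V lam"
  have "finite V" using simple_temporal_clique_finite[OF clique] .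
  have clique': "simple_temporal_clique V lam'"
    unfolding lam'_def using simple_temporal_clique_reverse_time[OF clique] .
  have choice': "valid_choice (Eminus_cand V lam') (Ep\<inverse>)"
    unfolding lam'_def using valid_choice_Eplus_cand_reverse_time[OF \<open>finite V\<close> choice_plus] .
  have "Ep \<subseteq> V \<times> V"
    using valid_choice_subset[OF choice_plus] unfolding Eplus_cand_def by blast
  then have backward: "backward_T lam Ep = (forward_T lam' (Ep\<inverse>))\<inverse>"
    unfolding lam'_def using backward_T_reverse_time[OF \<open>finite V\<close>] by blast
  note fwd = forward_T_bounds[OF clique choice_minus] and bwd = forward_T_bounds[OF clique' choice']
  define a where "a = card (emitters V (forward_T lam Em))"
  define b where "b = card (emitters V (forward_T lam' (Ep\<inverse>)))"
  have "card (fireworks_cover V lam Em Ep) \<le> 2 * n + 2 * n + a * b"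
    using card_fireworks_cover_le[OF \<open>finite V\<close> fwd(1), of Ep] fwd(2) bwd(1,2)
    unfolding backward collectors_eq_emitters_converse converse_converse a_def b_def n_def
    by simp
  moreover have "4 * (a * b) \<le> n * (n - 1) + 4 * n"
  proof (cases "n = 0")
    case True
    then have "a = 0" unfolding a_def n_def using \<open>finite V\<close> by (simp add: emitters_def)
    then show ?thesis by simp
  next
    case False
    have "(2 * a) * (2 * b) \<le> (n + 1) * (n + 1)"
      using fwd(3) bwd(3) unfolding a_def b_def n_def by (rule mult_le_mono)
    also have "\<dots> \<le> n * (n - 1) + 4 * n" using False by (cases n) auto
    finally show ?thesis by simp
  qed
  ultimately show ?thesis unfolding n_def by linarith
qed

theorem theorem7:
  shows "\<exists>C::real. \<forall>V lam Em Ep.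
           simple_temporal_clique V lam \<and>
           valid_choice (Eminus_cand V lam) Em \<and>
           valid_choice (Eplus_cand V lam) Ep \<longrightarrow>
           real (card (fireworks_cover V lam Em Ep))
             \<le> (1/2) * real (card V choose 2) + C * real (card V)"
proof (intro exI allI impI)
  fix V lam Em Ep
  assume "simple_temporal_clique V lam \<and> valid_choice (Eminus_cand V lam) Em \<and>
    valid_choice (Eplus_cand V lam) Ep"
  then have "4 * card (fireworks_cover V lam Em Ep) \<le> card V * (card V - 1) + 20 * card V"
    using card_fireworks_cover_bound by blast
  moreover have "card V * (card V - 1) = 2 * (card V choose 2)"
    unfolding choose_two by (cases "card V") auto
  ultimately show "real (card (fireworks_cover V lam Em Ep))
      \<le> (1/2) * real (card V choose 2) + 5 * real (card V)"
    by linarith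
qed

end
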